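(* Let $n\ge 1$ and let $f:\{0,1\}^n\to\{0,1\}^n$ be such that: (1) $G(f)$ has no circuit of length at least two; (2) every vertex of $G(f)$ with a positive loop also has a negative loop; (3) every vertex of $G(f)$ is reachable in $G(f)$ from a vertex with a negative loop. Then the asynchronous iteration graph $\Gamma(f)$ is strongly connected.
   Context: For $x\in\{0,1\}^n$ and $j\in\{1,\dots,n\}$, $\overline{x}^j$ denotes $x$ with its $j$-th component switched. The discrete Jacobian entries of $f=(f_1,\dots,f_n)$ are $f_{ij}(x)=\frac{f_i(\overline{x}^j)-f_i(x)}{\overline{x}^j_j-x_j}\in\{-1,0,1\}$. The interaction graph $G(f)$ is the signed directed graph on vertex set $\{1,\dots,n\}$ with an arc $(j,s,i)$ from $j$ to $i$ of sign $s\in\{-1,1\}$ whenever $f_{ij}(x)=s$ for some $x\in\{0,1\}^n$ (arcs of both signs between the same pair are allowed). A path is a sequence of arcs $(i_1,s_1,i_2),(i_2,s_2,i_3),\dots,(i_r,s_r,i_{r+1})$, of length $r$; $i_{r+1}$ is then reachable from $i_1$. It is a circuit if $i_{r+1}=i_1$ and $i_1,\dots,i_r$ are pairwise distinct. A vertex has a positive (resp. negative) loop if there is a positive (resp. negative) arc from it to itself. With $F_f(i,x)=(x_1,\dots,x_{i-1},f_i(x),x_{i+1},\dots,x_n)$, the asynchronous iteration graph $\Gamma(f)$ has vertex set $\{0,1\}^n$ and an arc from $x$ to $F_f(i,x)$ for every $x$ and every $i\in\{1,\dots,n\}$. *)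

theory Defs
  imports Main
begin

text \<open>Components are indexed by a finite type 'n (so n = CARD('n) \<ge> 1);
  a state x \<in> {0,1}^n is a function 'n \<Rightarrow> bool (True = 1, False = 0).\<close>

definition flip :: "('n \<Rightarrow> bool) \<Rightarrow> 'n \<Rightarrow> ('n \<Rightarrow> bool)" where
  "flip x j = x(j := \<not> x j)"

definition jac :: "(('n \<Rightarrow> bool) \<Rightarrow> ('n \<Rightarrow> bool)) \<Rightarrow> 'n \<Rightarrow> 'n \<Rightarrow> ('n \<Rightarrow> bool) \<Rightarrow> int" where
  "jac f i j x = (of_bool (f (flip x j) i) - of_bool (f x i)) div (of_bool (flip x j j) - of_bool (x j))"

definition ig_arc :: "(('n \<Rightarrow> bool) \<Rightarrow> ('n \<Rightarrow> bool)) \<Rightarrow> 'n \<Rightarrow> int \<Rightarrow> 'n \<Rightarrow> bool" where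
  "ig_arc f j s i \<longleftrightarrow> s \<in> {-1, 1} \<and> (\<exists>x. jac f i j x = s)"

definition has_circuit :: "(('n \<Rightarrow> bool) \<Rightarrow> ('n \<Rightarrow> bool)) \<Rightarrow> nat \<Rightarrow> bool" where
  "has_circuit f r \<longleftrightarrow> (\<exists>vs. length vs = r \<and> distinct vs \<and>
      (\<forall>k<r. \<exists>s. ig_arc f (vs ! k) s (vs ! ((k + 1) mod r))))"

definition ig_reachable :: "(('n \<Rightarrow> bool) \<Rightarrow> ('n \<Rightarrow> bool)) \<Rightarrow> 'n \<Rightarrow> 'n \<Rightarrow> bool" where
  "ig_reachable f j i \<longleftrightarrow> (\<lambda>a b. \<exists>s. ig_arc f a s b)\<^sup>+\<^sup>+ j i"

definition Fupd :: "(('n \<Rightarrow> bool) \<Rightarrow> ('n \<Rightarrow> bool)) \<Rightarrow> 'n \<Rightarrow> ('n \<Rightarrow> bool) \<Rightarrow> ('n \<Rightarrow> bool)" where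
  "Fupd f i x = x(i := f x i)"

definition async_arc :: "(('n \<Rightarrow> bool) \<Rightarrow> ('n \<Rightarrow> bool)) \<Rightarrow> ('n \<Rightarrow> bool) \<Rightarrow> ('n \<Rightarrow> bool) \<Rightarrow> bool" where
  "async_arc f x y \<longleftrightarrow> (\<exists>i. y = Fupd f i x)"

definition async_strongly_connected :: "(('n \<Rightarrow> bool) \<Rightarrow> ('n \<Rightarrow> bool)) \<Rightarrow> bool" where
  "async_strongly_connected f \<longleftrightarrow> (\<forall>x y. (async_arc f)\<^sup>*\<^sup>* x y)"

end

theory Submission
  imports Defs "HOL-Library.Transitive_Closure_Table"
begin

text \<open>Without circuits of length at least two, the arcs of G(f) between distinct vertices form
  an acyclic relation. Take a set S of components that contains every regulator of its members
  and a vertex n of S with no successor in S, so that S - {n} has the same closure property.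
  Any two states that agree outside S are connected through updates in S: first move the
  components of S - {n} into a configuration in which the update of n changes x_n (one exists
  because n either has a negative loop or, lacking loops, is regulated by some other vertex),
  update n, and finish inside S - {n} by induction. For S the set of all components this is
  strong connectivity.\<close>

definition ig_edge :: "(('n \<Rightarrow> bool) \<Rightarrow> ('n \<Rightarrow> bool)) \<Rightarrow> 'n rel" where
  "ig_edge f = {(a, b). a \<noteq> b \<and> (\<exists>s. ig_arc f a s b)}"

definition async_arc_on :: "(('n \<Rightarrow> bool) \<Rightarrow> ('n \<Rightarrow> bool)) \<Rightarrow> 'n set \<Rightarrow> ('n \<Rightarrow> bool) \<Rightarrow> ('n \<Rightarrow> bool) \<Rightarrow> bool" where
  "async_arc_on f S x y \<longleftrightarrow> (\<exists>i\<in>S. y = Fupd f i x)"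

lemma async_arc_on_mono: "S \<subseteq> T \<Longrightarrow> async_arc_on f S \<le> async_arc_on f T"
  unfolding async_arc_on_def by blast

lemma async_arc_on_UNIV: "async_arc_on f UNIV = async_arc f"
  unfolding async_arc_on_def async_arc_def by blast

lemma ig_arc_if_flip_changes:
  assumes "f (flip x j) i \<noteq> f x i"
  shows "ig_arc f j (jac f i j x) i"
proof -
  have "jac f i j x \<in> {-1, 1}"
    using assms unfolding jac_def flip_def
    by (cases "x j"; cases "f (x(j := \<not> x j)) i"; cases "f x i") simp_all
  then show ?thesis
    unfolding ig_arc_def by blast
qed

lemma flip_changes_if_ig_arc:
  assumes "ig_arc f j s i"
  obtains x where "f (flip x j) i \<noteq> f x i"
proof -
  from assms obtain x where jac: "jac f i j x = s" and "s \<noteq> 0"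
    unfolding ig_arc_def by auto
  have "f (flip x j) i \<noteq> f x i"
  proof
    assume "f (flip x j) i = f x i"
    then have "jac f i j x = 0"
      unfolding jac_def by simp
    with jac \<open>s \<noteq> 0\<close> show False by simp
  qed
  then show thesis ..
qed

lemma negative_loop_flips:
  assumes "ig_arc f i (-1) i"
  obtains x where "\<And>b. f (x(i := b)) i = (\<not> b)"
proof -
  from assms obtain x where "jac f i i x = -1"
    unfolding ig_arc_def by auto
  then have "f (x(i := b)) i = (\<not> b)" for b
    unfolding jac_def flip_def
    by (cases "x i"; cases b; cases "f (x(i := \<not> x i)) i"; cases "f x i") (auto simp: fun_upd_idem)
  then show thesis ..
qed

lemma eq_on_regulators_imp_eq:
  fixes x y :: "'n::finite \<Rightarrow> bool"
  assumes "\<And>a s. ig_arc f a s i \<Longrightarrow> x a = y a"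
  shows "f x i = f y i"
proof -
  have "f x' i = f y i"
    if "{a. x' a \<noteq> y a} = D" and "\<forall>a\<in>D. \<forall>s. \<not> ig_arc f a s i" for D x'
    using finite[of D] that
  proof (induction D arbitrary: x' rule: finite_induct)
    case empty
    then have "x' = y" by auto
    then show ?case by simp
  next
    case (insert a D)
    have "{b. flip x' a b \<noteq> y b} = D"
      using insert.prems(1) insert.hyps(2) unfolding flip_def by auto
    then have "f (flip x' a) i = f y i"
      using insert.IH insert.prems(2) by blast
    moreover have "f (flip x' a) i = f x' i"
      using ig_arc_if_flip_changes[of f x' a i] insert.prems(2) by blast
    ultimately show ?case by simp
  qed
  from this[OF refl] show ?thesis
    using assms by blast
qed

lemma acyclic_ig_edge:
  assumes no_circuit: "\<forall>r\<ge>2. \<not> has_circuit f r"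
  shows "acyclic (ig_edge f)"
  unfolding acyclic_def
proof (intro allI notI)
  let ?E = "\<lambda>u v. (u, v) \<in> ig_edge f"
  fix a
  assume "(a, a) \<in> (ig_edge f)\<^sup>+"
  then obtain b where ab: "(a, b) \<in> ig_edge f" and "(b, a) \<in> (ig_edge f)\<^sup>*"
    by (auto dest: tranclD)
  then obtain xs where "rtrancl_path ?E b xs a"
    by (auto simp: rtranclp_eq_rtrancl_path rtrancl_def)
  then obtain ys where path: "rtrancl_path ?E b ys a" and dist: "distinct (b # ys)"
    by (rule rtrancl_path_distinct)
  have "ys \<noteq> []"
    using path ab unfolding ig_edge_def by (auto elim: rtrancl_path.cases)
  have last: "last ys = a"
    using path \<open>ys \<noteq> []\<close> by (rule rtrancl_path_last)
  define vs where "vs = b # ys"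
  have "\<exists>s. ig_arc f (vs ! k) s (vs ! ((k + 1) mod length vs))" if "k < length vs" for k
  proof (cases "k < length ys")
    case True
    then show ?thesis
      using rtrancl_path_nth[OF path True] unfolding vs_def ig_edge_def by auto
  next
    case False
    with that have "k = length ys"
      unfolding vs_def by simp
    then have "vs ! k = a" "vs ! ((k + 1) mod length vs) = b"
      using last \<open>ys \<noteq> []\<close> unfolding vs_def by (simp_all add: last_conv_nth)
    then show ?thesis
      using ab unfolding ig_edge_def by auto
  qed
  then have "has_circuit f (length vs)"
    unfolding has_circuit_def using dist vs_def by blast
  moreover have "length vs \<ge> 2"
    using \<open>ys \<noteq> []\<close> unfolding vs_def by (cases ys) auto
  ultimately show False
    using no_circuit by blast
qed

lemma exists_state_flipping:
  fixes f :: "('n::finite \<Rightarrow> bool) \<Rightarrow> ('n \<Rightarrow> bool)"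
  assumes pos_loop_neg: "\<forall>i. ig_arc f i 1 i \<longrightarrow> ig_arc f i (-1) i"
    and reach: "\<forall>i. \<exists>j. ig_arc f j (-1) j \<and> ig_reachable f j i"
  shows "\<exists>z. f (z(i := b)) i = (\<not> b)"
proof (cases "ig_arc f i (-1) i")
  case True
  then show ?thesis
    by (metis negative_loop_flips)
next
  case False
  then have no_loop: "\<not> ig_arc f i s i" for s
    using pos_loop_neg unfolding ig_arc_def by auto
  have independent: "f (z(i := c)) i = f z i" for z c
    by (rule eq_on_regulators_imp_eq[of f]) (use no_loop in auto)
  obtain j where "ig_reachable f j i"
    using reach by blast
  then obtain a s where "ig_arc f a s i"
    unfolding ig_reachable_def by (blast elim: tranclp.cases)
  then obtain x where "f (flip x a) i \<noteq> f x i"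
    by (rule flip_changes_if_ig_arc)
  then have "f (flip x a) i = (\<not> b) \<or> f x i = (\<not> b)"
    by blast
  then show ?thesis
    by (metis independent)
qed

lemma exists_state_enabling_flip:
  fixes f :: "('n::finite \<Rightarrow> bool) \<Rightarrow> ('n \<Rightarrow> bool)"
  assumes flippable: "\<And>i b. \<exists>z. f (z(i := b)) i = (\<not> b)"
    and regulators: "(ig_edge f)\<inverse> `` {n} \<subseteq> T"
    and "n \<notin> T"
  obtains w where "\<forall>k. k \<notin> T \<longrightarrow> w k = x k" and "f w n = (\<not> x n)"
proof -
  obtain z where z: "f (z(n := x n)) n = (\<not> x n)"
    using flippable by blast
  define w where "w = (\<lambda>k. if k \<in> T then z k else x k)"
  have "f w n = f (z(n := x n)) n"
  proof (rule eq_on_regulators_imp_eq[of f])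
    fix a s
    assume "ig_arc f a s n"
    then have "a = n \<or> a \<in> T"
      using regulators unfolding ig_edge_def by blast
    then show "w a = (z(n := x n)) a"
      using \<open>n \<notin> T\<close> unfolding w_def by auto
  qed
  with z have "f w n = (\<not> x n)"
    by simp
  moreover have "\<forall>k. k \<notin> T \<longrightarrow> w k = x k"
    unfolding w_def by simp
  ultimately show thesis
    using that by blast
qed

lemma rtranclp_async_arc_on_if_agree_outside:
  fixes f :: "('n::finite \<Rightarrow> bool) \<Rightarrow> ('n \<Rightarrow> bool)"
  assumes no_cycle: "acyclic (ig_edge f)"
    and flippable: "\<And>i b. \<exists>z. f (z(i := b)) i = (\<not> b)"
    and "(ig_edge f)\<inverse> `` S \<subseteq> S"
    and "\<forall>k. k \<notin> S \<longrightarrow> x k = y k"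
  shows "(async_arc_on f S)\<^sup>*\<^sup>* x y"
  using finite[of S] assms(3,4)
proof (induction S arbitrary: x y rule: finite_psubset_induct)
  case (psubset S)
  show ?case
  proof (cases "S = {}")
    case True
    then have "x = y"
      using psubset.prems(2) by auto
    then show ?thesis by simp
  next
    case False
    have wf: "wf ((ig_edge f)\<inverse>)"
      using no_cycle by (simp add: finite_acyclic_wf_converse)
    obtain n where n: "n \<in> S" and sink: "\<And>m. (m, n) \<in> (ig_edge f)\<inverse> \<Longrightarrow> m \<notin> S"
      using wfE_min'[OF wf False] by blast
    define S' where "S' = S - {n}"
    have "(ig_edge f)\<inverse> `` S' \<subseteq> S'"
      using psubset.prems(1) sink unfolding S'_def by blast
    moreover have "S' \<subset> S"
      using n unfolding S'_def by blast
    ultimately have IH: "(async_arc_on f S)\<^sup>*\<^sup>* u v" if "\<forall>k. k \<notin> S' \<longrightarrow> u k = v k" for u v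
      using psubset.IH[of S' u v] that rtranclp_mono[OF async_arc_on_mono[of S' S f]] by blast
    show ?thesis
    proof (cases "x n = y n")
      case True
      then show ?thesis
        using IH psubset.prems(2) unfolding S'_def by auto
    next
      case False
      have "(ig_edge f)\<inverse> `` {n} \<subseteq> S'"
        using psubset.prems(1) n unfolding S'_def ig_edge_def by blast
      then obtain w where w: "\<forall>k. k \<notin> S' \<longrightarrow> w k = x k" and "f w n = (\<not> x n)"
        using exists_state_enabling_flip[OF flippable, of n S' x] unfolding S'_def by blast
      then have "f w n = y n"
        using False by auto
      then have "(async_arc_on f S)\<^sup>*\<^sup>* (Fupd f n w) y"
        using IH psubset.prems(2) w unfolding Fupd_def S'_def by auto
      moreover have "async_arc_on f S w (Fupd f n w)"
        using n unfolding async_arc_on_def by blast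
      moreover have "(async_arc_on f S)\<^sup>*\<^sup>* x w"
        using IH w by auto
      ultimately show ?thesis
        by (meson converse_rtranclp_into_rtranclp rtranclp_trans)
    qed
  qed
qed

theorem theorem2:
  fixes f :: "('n::finite \<Rightarrow> bool) \<Rightarrow> ('n \<Rightarrow> bool)"
  assumes no_circuit: "\<forall>r\<ge>2. \<not> has_circuit f r"
    and pos_loop_neg: "\<forall>i. ig_arc f i 1 i \<longrightarrow> ig_arc f i (-1) i"
    and reach: "\<forall>i. \<exists>j. ig_arc f j (-1) j \<and> ig_reachable f j i"
  shows "async_strongly_connected f"
  unfolding async_strongly_connected_def
proof (intro allI)
  fix x y :: "'n \<Rightarrow> bool"
  have "(async_arc_on f UNIV)\<^sup>*\<^sup>* x y"
    by (rule rtranclp_async_arc_on_if_agree_outside[OF acyclic_ig_edge[OF no_circuit]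
          exists_state_flipping[OF pos_loop_neg reach]]) auto
  then show "(async_arc f)\<^sup>*\<^sup>* x y"
    by (simp add: async_arc_on_UNIV)
qed

end
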